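(* Let $X\in\mathbb{R}^{n\times p}$ be a fixed matrix with rows $X_1^\top,\dots,X_n^\top$ and nonzero columns $V_1,\dots,V_p$, let $\beta\in\mathbb{R}^p$, let $\epsilon$ be a random vector in $\mathbb{R}^n$, and let $D\subset\mathbb{R}^p$. Let $G:\mathbb{R}^n\to\mathbb{R}$ be a function, and let $\psi=(\psi_1,\dots,\psi_n)$, $\varphi=(\varphi_1,\dots,\varphi_n)$ with each $\psi_i,\varphi_i:\mathbb{R}\to\mathbb{R}$. Fix $q\in(0,1)$ and $c_0>0$. Suppose: (i) there is $c_1>0$ such that $$\Pr\Big\{|\langle \epsilon,\varphi(Xv)-\varphi(X\beta)\rangle|\le c_1\sqrt{n}\,\|v-\beta\|_1 \text{ for all } v\in D\Big\}\ge 1-c_0q;$$ (ii) there is $c_3>0$ such that $G(\psi(z)-\psi(X\beta))\ge c_3\|z-X\beta\|_2^2$ for all $z\in\{Xv: v\in D\}$. Define $$\mu_X=\max_{1\le i<j\le p}\frac{|V_i^\top V_j|}{\|V_i\|_2\|V_j\|_2},\quad a_X=\min_{1\le i\le p}\frac{\|V_i\|_2^2}{n},\quad b_X=\max_{1\le i\le p}\frac{\|V_i\|_2^2}{n},$$ and suppose $a_X+b_X\mu_X>6b_X|\mathrm{spt}(\beta)|\mu_X$. Fix $\tau>0$ such that $$a_X+b_X\mu_X>2b_X(3+4\tau)|\mathrm{spt}(\beta)|\mu_X,$$ and let $c_r=2(1+1/\tau)c_1\sqrt{n}$ and $$\kappa_r=\frac{3(2+1/\tau)\sqrt{2+(1+2\tau)^2}}{a_X+b_X\mu_X}\cdot\frac{c_1}{c_3}.$$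 If $\hat\beta\in D$ is a random variable that always satisfies $$G(\psi(X\hat\beta)-\psi(X\beta))\le 2|\langle\epsilon,\varphi(X\hat\beta)-\varphi(X\beta)\rangle| - c_r(\|\hat\beta\|_1-\|\beta\|_1),$$ then $$\Pr\Big\{\|\hat\beta-\beta\|_2\le \kappa_r\sqrt{|\mathrm{spt}(\beta)|/n}\Big\}\ge 1-c_0q.$$
   Context: For functions $g_1,\dots,g_n:\mathbb{R}\to\mathbb{R}$, $g=(g_1,\dots,g_n)$ and $x\in\mathbb{R}^n$, write $g(x)=(g_1(x_1),\dots,g_n(x_n))^\top$. For $v\in\mathbb{R}^p$, $\|v\|_a$ is the $\ell_a$-norm, and $\mathrm{spt}(v)=\{i: v_i\neq 0\}$ is the support of $v$, with $|\mathrm{spt}(v)|$ its cardinality. $\langle\cdot,\cdot\rangle$ is the Euclidean inner product on $\mathbb{R}^n$. *)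

theory Defs
  imports "HOL-Probability.Probability"
begin

definition compw :: "('n \<Rightarrow> real \<Rightarrow> real) \<Rightarrow> real^'n \<Rightarrow> real^'n" where
  "compw g x = (\<chi> i. g i (x $ i))"

definition l1norm :: "real^'n \<Rightarrow> real" where
  "l1norm v = (\<Sum>i\<in>UNIV. \<bar>v $ i\<bar>)"

definition spt :: "real^'n \<Rightarrow> 'n set" where
  "spt v = {i. v $ i \<noteq> 0}"

definition mu_X :: "real^'p^'n \<Rightarrow> real" where
  "mu_X X = (if CARD('p) \<ge> 2 then
     Max {\<bar>column i X \<bullet> column j X\<bar> / (norm (column i X) * norm (column j X)) | i j. i \<noteq> j}
   else 0)"

definition a_X :: "real^'p^'n \<Rightarrow> real" where
  "a_X X = Min {(norm (column i X))\<^sup>2 / real CARD('n) | i. True}"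

definition b_X :: "real^'p^'n \<Rightarrow> real" where
  "b_X X = Max {(norm (column i X))\<^sup>2 / real CARD('n) | i. True}"

end

theory Submission
  imports Defs
begin

text \<open>Write \<open>h = \<beta>hat - \<beta>\<close> and split it along \<open>S = spt \<beta>\<close> into \<open>h\<^sub>S\<close> and \<open>h\<^sub>S\<^sub>c\<close>.
  On the event of (i), hypotheses (ii) and the defining inequality of \<open>\<beta>hat\<close> give the basic
  inequality \<open>c\<^sub>3 \<parallel>Xh\<parallel>\<^sup>2 \<le> 2\<lambda> \<parallel>h\<parallel>\<^sub>1 - 2(1 + 1/\<tau>)\<lambda> (\<parallel>\<beta> + h\<parallel>\<^sub>1 - \<parallel>\<beta>\<parallel>\<^sub>1)\<close> with \<open>\<lambda> = c\<^sub>1\<surd>n\<close>.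
  It forces the cone condition \<open>\<parallel>h\<^sub>S\<^sub>c\<parallel>\<^sub>1 \<le> (1 + 2\<tau>) \<parallel>h\<^sub>S\<parallel>\<^sub>1\<close> and the upper bound
  \<open>c\<^sub>3 \<parallel>Xh\<parallel>\<^sup>2 \<le> 2\<lambda>(2 + 1/\<tau>) \<parallel>h\<^sub>S\<parallel>\<^sub>1\<close>. The Gram matrix of \<open>X\<close> is at least \<open>n a\<^sub>X\<close> on the
  diagonal and at most \<open>n b\<^sub>X \<mu>\<^sub>X\<close> off it, so on the cone the coherence condition bounds
  \<open>\<parallel>Xh\<parallel>\<^sup>2\<close> from below by multiples of \<open>\<parallel>h\<^sub>S\<parallel>\<^sub>2\<^sup>2\<close> and of \<open>\<parallel>h\<parallel>\<^sub>2\<^sup>2\<close>; together with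
  \<open>\<parallel>h\<^sub>S\<parallel>\<^sub>1 \<le> \<surd>|S| \<parallel>h\<^sub>S\<parallel>\<^sub>2\<close> this bounds \<open>\<parallel>h\<parallel>\<^sub>2\<close> deterministically on the event.\<close>

lemma inner_matrix_vector_mult_columns:
  fixes X :: "real^'p^'n"
  shows "(X *v g) \<bullet> (X *v k) = (\<Sum>i\<in>UNIV. \<Sum>j\<in>UNIV. g$i * k$j * (column i X \<bullet> column j X))"
  by (simp add: matrix_mult_sum scalar_mult_eq_scaleR inner_sum_left inner_sum_right
      sum_distrib_left mult.assoc) (subst sum.swap, simp add: mult_ac)

lemma norm_sq_eq_sum_sq: "(norm v)\<^sup>2 = (\<Sum>i\<in>UNIV. (v$i)\<^sup>2)"
  for v :: "real^'n"
  unfolding power2_norm_eq_inner inner_vec_def by (simp add: power2_eq_square)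

lemma l1norm_nonneg: "0 \<le> l1norm v"
  unfolding l1norm_def by (simp add: sum_nonneg)

lemma abs_inner_matrix_vector_mult_offdiag:
  fixes X :: "real^'p^'n"
  assumes off: "\<And>i j. i \<noteq> j \<Longrightarrow> \<bar>column i X \<bullet> column j X\<bar> \<le> B"
  shows "\<bar>(X *v g) \<bullet> (X *v k) - (\<Sum>i\<in>UNIV. g$i * k$i * (column i X \<bullet> column i X))\<bar>
     \<le> B * (l1norm g * l1norm k - (\<Sum>i\<in>UNIV. \<bar>g$i\<bar> * \<bar>k$i\<bar>))"
proof -
  let ?G = "\<lambda>i j. column i X \<bullet> column j X"
  have "(X *v g) \<bullet> (X *v k) - (\<Sum>i\<in>UNIV. g$i * k$i * ?G i i)
      = (\<Sum>i\<in>UNIV. \<Sum>j\<in>UNIV-{i}. g$i * k$j * ?G i j)"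
  proof -
    have "(\<Sum>j\<in>UNIV. g$i * k$j * ?G i j) = g$i * k$i * ?G i i + (\<Sum>j\<in>UNIV-{i}. g$i * k$j * ?G i j)"
      for i by (subst sum.remove[where x=i]) simp_all
    then show ?thesis
      unfolding inner_matrix_vector_mult_columns by (simp add: sum.distrib)
  qed
  also have "\<bar>\<dots>\<bar> \<le> (\<Sum>i\<in>UNIV. \<Sum>j\<in>UNIV-{i}. \<bar>g$i\<bar> * \<bar>k$j\<bar> * B)"
    by (intro order_trans[OF sum_abs sum_mono] order_trans[OF sum_abs sum_mono])
       (auto simp: abs_mult intro!: mult_left_mono off)
  also have "\<dots> = B * (l1norm g * l1norm k - (\<Sum>i\<in>UNIV. \<bar>g$i\<bar> * \<bar>k$i\<bar>))"
  proof -
    have "(\<Sum>j\<in>UNIV. \<bar>g$i\<bar> * \<bar>k$j\<bar>) = \<bar>g$i\<bar> * \<bar>k$i\<bar> + (\<Sum>j\<in>UNIV-{i}. \<bar>g$i\<bar> * \<bar>k$j\<bar>)"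
      for i by (subst sum.remove[where x=i]) simp_all
    then show ?thesis
      unfolding l1norm_def sum_product by (simp add: sum.distrib sum_distrib_left sum_distrib_right mult_ac)
  qed
  finally show ?thesis .
qed

lemma norm_matrix_vector_mult_sq_ge:
  fixes X :: "real^'p^'n"
  assumes diag: "\<And>i. d \<le> column i X \<bullet> column i X"
    and off: "\<And>i j. i \<noteq> j \<Longrightarrow> \<bar>column i X \<bullet> column j X\<bar> \<le> B"
  shows "(d + B) * (norm g)\<^sup>2 - B * (l1norm g)\<^sup>2 \<le> (norm (X *v g))\<^sup>2"
proof -
  let ?diag = "\<Sum>i\<in>UNIV. g$i * g$i * (column i X \<bullet> column i X)"
  have "d * (norm g)\<^sup>2 \<le> ?diag"
    unfolding norm_sq_eq_sum_sq sum_distrib_left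
    by (intro sum_mono) (metis diag mult.commute mult_left_mono zero_le_square power2_eq_square)
  moreover have "(\<Sum>i\<in>UNIV. \<bar>g$i\<bar> * \<bar>g$i\<bar>) = (norm g)\<^sup>2"
    unfolding norm_sq_eq_sum_sq by (simp add: power2_eq_square)
  then have "\<bar>(X *v g) \<bullet> (X *v g) - ?diag\<bar> \<le> B * ((l1norm g)\<^sup>2 - (norm g)\<^sup>2)"
    using abs_inner_matrix_vector_mult_offdiag[OF off, of g g] by (simp add: power2_eq_square)
  ultimately show ?thesis
    by (simp add: power2_norm_eq_inner[of "X *v g"] algebra_simps abs_le_iff)
qed

lemma abs_inner_matrix_vector_mult_disjoint_le:
  fixes X :: "real^'p^'n"
  assumes off: "\<And>i j. i \<noteq> j \<Longrightarrow> \<bar>column i X \<bullet> column j X\<bar> \<le> B"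
    and disj: "\<And>i. g$i = 0 \<or> k$i = 0"
  shows "\<bar>(X *v g) \<bullet> (X *v k)\<bar> \<le> B * l1norm g * l1norm k"
proof -
  have "(\<Sum>i\<in>UNIV. g$i * k$i * (column i X \<bullet> column i X)) = 0"
    "(\<Sum>i\<in>UNIV. \<bar>g$i\<bar> * \<bar>k$i\<bar>) = 0"
    using disj by (auto intro!: sum.neutral)
  then show ?thesis
    using abs_inner_matrix_vector_mult_offdiag[OF off, of g k] by (simp add: mult.assoc)
qed

definition restrict_vec :: "'n set \<Rightarrow> real^'n \<Rightarrow> real^'n" where
  "restrict_vec S v = (\<chi> i. if i \<in> S then v$i else 0)"

lemma restrict_vec_add_compl: "restrict_vec S v + restrict_vec (- S) v = v"
  by (simp add: restrict_vec_def vec_eq_iff)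

lemma restrict_vec_disjoint: "restrict_vec S v $ i = 0 \<or> restrict_vec (- S) w $ i = 0"
  by (simp add: restrict_vec_def)

lemma spt_restrict_vec_subset: "spt (restrict_vec S v) \<subseteq> S"
  by (auto simp: spt_def restrict_vec_def)

lemma l1norm_restrict_vec_add_compl:
  "l1norm (restrict_vec S v) + l1norm (restrict_vec (- S) v) = l1norm v"
  unfolding l1norm_def sum.distrib[symmetric] by (rule sum.cong) (auto simp: restrict_vec_def)

lemma norm_sq_restrict_vec_add_compl:
  "(norm (restrict_vec S v))\<^sup>2 + (norm (restrict_vec (- S) v))\<^sup>2 = (norm v)\<^sup>2"
  unfolding norm_sq_eq_sum_sq sum.distrib[symmetric]
  by (rule sum.cong) (auto simp: restrict_vec_def)

lemma l1norm_sq_le_card_mult_norm_sq: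
  assumes "spt v \<subseteq> S"
  shows "(l1norm v)\<^sup>2 \<le> real (card S) * (norm v)\<^sup>2"
proof -
  have "l1norm v = (\<Sum>i\<in>UNIV. of_bool (i \<in> S) * \<bar>v$i\<bar>)"
    unfolding l1norm_def using assms by (intro sum.cong) (auto simp: spt_def)
  also have "\<dots>\<^sup>2 \<le> (\<Sum>i\<in>UNIV. (of_bool (i \<in> S))\<^sup>2) * (\<Sum>i\<in>UNIV. \<bar>v$i\<bar>\<^sup>2)"
    by (rule Cauchy_Schwarz_ineq_sum)
  also have "(\<Sum>i\<in>UNIV. (of_bool (i \<in> S))\<^sup>2) = real (card S)"
    by (simp add: power2_eq_square flip: of_bool_conj)
  also have "(\<Sum>i\<in>UNIV. \<bar>v$i\<bar>\<^sup>2) = (norm v)\<^sup>2"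
    by (simp add: norm_sq_eq_sum_sq)
  finally show ?thesis .
qed

lemma l1norm_add_ge_compl_minus_spt:
  "l1norm (restrict_vec (- spt \<beta>) h) - l1norm (restrict_vec (spt \<beta>) h) \<le> l1norm (\<beta> + h) - l1norm \<beta>"
proof -
  have "\<bar>\<beta>$i\<bar> - \<bar>restrict_vec (spt \<beta>) h $ i\<bar> + \<bar>restrict_vec (- spt \<beta>) h $ i\<bar> \<le> \<bar>(\<beta> + h)$i\<bar>" for i
    by (cases "\<beta>$i = 0") (auto simp: restrict_vec_def spt_def)
  then have "(\<Sum>i\<in>UNIV. \<bar>\<beta>$i\<bar> - \<bar>restrict_vec (spt \<beta>) h $ i\<bar> + \<bar>restrict_vec (- spt \<beta>) h $ i\<bar>)
      \<le> l1norm (\<beta> + h)"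
    unfolding l1norm_def by (rule sum_mono)
  then show ?thesis
    unfolding l1norm_def by (simp add: sum.distrib sum_subtractf)
qed

lemma finite_column_values: "finite {f (column i X) | i. True}"
  for X :: "real^'p^'n"
  by (rule finite_subset[of _ "(\<lambda>i. f (column i X)) ` UNIV"]) auto

lemma column_inner_self_ge_a_X:
  fixes X :: "real^'p^'n"
  shows "real CARD('n) * a_X X \<le> column i X \<bullet> column i X"
proof -
  have "a_X X \<le> (norm (column i X))\<^sup>2 / real CARD('n)"
    unfolding a_X_def by (rule Min_le[OF finite_column_values]) auto
  then show ?thesis
    by (simp add: power2_norm_eq_inner pos_le_divide_eq mult.commute)
qed

lemma norm_column_sq_le_b_X:
  fixes X :: "real^'p^'n"
  shows "(norm (column i X))\<^sup>2 \<le> real CARD('n) * b_X X"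
proof -
  have "(norm (column i X))\<^sup>2 / real CARD('n) \<le> b_X X"
    unfolding b_X_def by (rule Max_ge[OF finite_column_values]) auto
  then show ?thesis
    by (simp add: pos_divide_le_eq mult.commute)
qed

lemma b_X_nonneg: "0 \<le> b_X X"
  for X :: "real^'p^'n"
proof -
  have "0 \<le> real CARD('n) * b_X X"
    using order.trans[OF zero_le_power2 norm_column_sq_le_b_X] .
  then show ?thesis
    by (simp add: zero_le_mult_iff)
qed

lemma coherence_quotient_le_mu_X:
  fixes X :: "real^'p^'n"
  assumes "i \<noteq> j"
  shows "\<bar>column i X \<bullet> column j X\<bar> / (norm (column i X) * norm (column j X)) \<le> mu_X X"
proof -
  let ?Q = "\<lambda>i j. \<bar>column i X \<bullet> column j X\<bar> / (norm (column i X) * norm (column j X))"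
  have "card {i, j} \<le> CARD('p)"
    by (rule card_mono) auto
  with assms have "2 \<le> CARD('p)"
    by simp
  moreover have "finite {?Q i j | i j. i \<noteq> j}"
    by (rule finite_subset[of _ "(\<lambda>(i, j). ?Q i j) ` UNIV"]) auto
  ultimately show ?thesis
    unfolding mu_X_def by simp (rule Max_ge, use assms in auto)
qed

lemma mu_X_nonneg: "0 \<le> mu_X X"
  for X :: "real^'p^'n"
proof (cases "2 \<le> CARD('p)")
  case True
  obtain i :: 'p where True
    by simp
  have "UNIV \<noteq> {i}"
    using True by (auto dest: arg_cong[where f = card])
  then obtain j where "j \<noteq> i"
    by auto
  then show ?thesis
    using order.trans[OF _ coherence_quotient_le_mu_X[of j i X]] by simp
qed (simp add: mu_X_def)

lemma abs_column_inner_le_b_X_mu_X: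
  fixes X :: "real^'p^'n"
  assumes "column i X \<noteq> 0" "column j X \<noteq> 0" "i \<noteq> j"
  shows "\<bar>column i X \<bullet> column j X\<bar> \<le> real CARD('n) * (b_X X * mu_X X)"
proof -
  let ?x = "norm (column i X)" and ?y = "norm (column j X)"
  have "?x * ?y \<le> real CARD('n) * b_X X"
    using sum_squares_bound[of ?x ?y] norm_column_sq_le_b_X[of i X] norm_column_sq_le_b_X[of j X]
    by linarith
  moreover have "\<bar>column i X \<bullet> column j X\<bar> \<le> mu_X X * (?x * ?y)"
    using coherence_quotient_le_mu_X[OF assms(3), of X] assms by (simp add: pos_divide_le_eq)
  ultimately show ?thesis
    using mult_left_mono[OF _ mu_X_nonneg[of X]] by (fastforce simp: mult_ac)
qed

lemma basic_inequality_cone: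
  fixes \<beta> h :: "real^'p" and F lam \<tau> :: real
  assumes "0 < lam" "0 < \<tau>" "0 \<le> F"
    and basic: "F \<le> 2 * lam * l1norm h - 2 * (1 + 1 / \<tau>) * lam * (l1norm (\<beta> + h) - l1norm \<beta>)"
  shows "l1norm (restrict_vec (- spt \<beta>) h) \<le> (1 + 2 * \<tau>) * l1norm (restrict_vec (spt \<beta>) h)"
    and "F \<le> 2 * lam * (2 + 1 / \<tau>) * l1norm (restrict_vec (spt \<beta>) h)"
proof -
  define t where "t = l1norm (restrict_vec (spt \<beta>) h)"
  define u where "u = l1norm (restrict_vec (- spt \<beta>) h)"
  have "2 * (1 + 1 / \<tau>) * lam * (u - t) \<le> 2 * (1 + 1 / \<tau>) * lam * (l1norm (\<beta> + h) - l1norm \<beta>)"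
    unfolding t_def u_def using assms(1,2) l1norm_add_ge_compl_minus_spt
    by (intro mult_left_mono) auto
  moreover have "l1norm h = t + u"
    unfolding t_def u_def by (simp add: l1norm_restrict_vec_add_compl)
  ultimately have "F \<le> 2 * lam * (t + u) - 2 * (1 + 1 / \<tau>) * lam * (u - t)"
    using basic by simp
  also have "\<dots> = 2 * lam * (2 + 1 / \<tau>) * t - 2 * lam * (u / \<tau>)"
    using assms(2) by (simp add: field_simps)
  finally have "F \<le> 2 * lam * (2 + 1 / \<tau>) * t - 2 * lam * (u / \<tau>)" .
  moreover have "0 \<le> 2 * lam * (u / \<tau>)"
    unfolding u_def using assms(1,2) l1norm_nonneg by (intro mult_nonneg_nonneg divide_nonneg_pos) auto
  ultimately have "2 * lam * (u / \<tau>) \<le> 2 * lam * (2 + 1 / \<tau>) * t"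
    and "F \<le> 2 * lam * (2 + 1 / \<tau>) * t"
    using assms(3) by linarith+
  moreover from this(1) have "u / \<tau> \<le> (2 + 1 / \<tau>) * t"
    using assms(1) by (simp only: mult.assoc mult_le_cancel_left_pos zero_less_mult_iff)
  then have "u \<le> (1 + 2 * \<tau>) * t"
    using assms(2) by (simp add: field_simps)
  ultimately show "u \<le> (1 + 2 * \<tau>) * t" and "F \<le> 2 * lam * (2 + 1 / \<tau>) * t"
    by simp_all
qed

lemma norm_matrix_vector_mult_sq_ge_on_cone:
  fixes X :: "real^'p^'n" and h :: "real^'p" and S :: "'p set" and d B \<tau> :: real
  assumes diag: "\<And>i. d \<le> column i X \<bullet> column i X"
    and off: "\<And>i j. i \<noteq> j \<Longrightarrow> \<bar>column i X \<bullet> column j X\<bar> \<le> B"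
    and "0 \<le> B" "0 < \<tau>"
    and cone: "l1norm (restrict_vec (- S) h) \<le> (1 + 2 * \<tau>) * l1norm (restrict_vec S h)"
    and cond: "2 * B * (3 + 4 * \<tau>) * real (card S) < d + B"
  shows "(d + B) / 2 * (norm (restrict_vec S h))\<^sup>2 \<le> (norm (X *v h))\<^sup>2"
    and "(d + B) * (norm h)\<^sup>2
      \<le> (norm (X *v h))\<^sup>2 + (d + B) * (1 / 2 + (1 + 2 * \<tau>)\<^sup>2 / 6) * (norm (restrict_vec S h))\<^sup>2"
proof -
  define hS where "hS = restrict_vec S h"
  define hC where "hC = restrict_vec (- S) h"
  define t where "t = l1norm hS"
  define u where "u = l1norm hC"
  define y where "y = (norm hS)\<^sup>2"
  define z where "z = (norm hC)\<^sup>2"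
  define Q where "Q = B * real (card S) * y"
  define w where "w = (1 + 2 * \<tau>)\<^sup>2"
  have "t\<^sup>2 \<le> real (card S) * y"
    unfolding t_def y_def hS_def by (rule l1norm_sq_le_card_mult_norm_sq[OF spt_restrict_vec_subset])
  then have t2: "B * t\<^sup>2 \<le> Q"
    unfolding Q_def using \<open>0 \<le> B\<close> by (simp add: mult_left_mono mult.assoc)
  have t0: "0 \<le> t" and u0: "0 \<le> u" and cone': "u \<le> (1 + 2 * \<tau>) * t"
    using cone unfolding t_def u_def hS_def hC_def by (simp_all add: l1norm_nonneg)
  have "B * (t * u) \<le> B * ((1 + 2 * \<tau>) * t\<^sup>2)"
    using mult_left_mono[OF cone' t0] \<open>0 \<le> B\<close> by (intro mult_left_mono) (simp_all add: power2_eq_square mult_ac)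
  also have "\<dots> \<le> (1 + 2 * \<tau>) * Q"
    using mult_left_mono[OF t2, of "1 + 2 * \<tau>"] \<open>0 < \<tau>\<close> by (simp add: mult_ac)
  finally have tu: "B * (t * u) \<le> (1 + 2 * \<tau>) * Q" .
  have "B * u\<^sup>2 \<le> B * (w * t\<^sup>2)"
    using power_mono[OF cone' u0, of 2] \<open>0 \<le> B\<close>
    by (intro mult_left_mono) (simp_all add: w_def power_mult_distrib)
  also have "\<dots> \<le> w * Q"
    using mult_left_mono[OF t2, of w] by (simp add: w_def mult_ac)
  finally have u2: "B * u\<^sup>2 \<le> w * Q" .
  have y0: "0 \<le> y"
    unfolding y_def by simp
  have Bs: "B * real (card S) * (6 + 8 * \<tau>) \<le> d + B"
    using cond by (simp add: algebra_simps)
  have Q_half: "(3 + 4 * \<tau>) * Q \<le> (d + B) / 2 * y"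
    using mult_right_mono[OF Bs y0] unfolding Q_def by (simp add: algebra_simps)
  have "B * real (card S) * 6 \<le> B * real (card S) * (6 + 8 * \<tau>)"
    using \<open>0 \<le> B\<close> \<open>0 < \<tau>\<close> by (intro mult_left_mono) auto
  with Bs have "B * real (card S) * 6 \<le> d + B"
    by linarith
  then have "B * real (card S) * y \<le> (d + B) / 6 * y"
    by (intro mult_right_mono[OF _ y0]) simp
  then have Q_sixth: "w * Q \<le> w * ((d + B) / 6 * y)"
    unfolding Q_def w_def by (rule mult_left_mono) simp
  have "X *v h = X *v hS + X *v hC"
    unfolding hS_def hC_def matrix_vector_right_distrib[symmetric] restrict_vec_add_compl ..
  then have expand: "(norm (X *v h))\<^sup>2
      = (norm (X *v hS))\<^sup>2 + 2 * ((X *v hS) \<bullet> (X *v hC)) + (norm (X *v hC))\<^sup>2"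
    using dot_norm[of "X *v hS" "X *v hC"] by simp
  have "(d + B) * y - B * t\<^sup>2 \<le> (norm (X *v hS))\<^sup>2"
    unfolding y_def t_def by (rule norm_matrix_vector_mult_sq_ge[OF diag off])
  moreover have "\<bar>(X *v hS) \<bullet> (X *v hC)\<bar> \<le> B * (t * u)"
    using abs_inner_matrix_vector_mult_disjoint_le[OF off restrict_vec_disjoint]
    unfolding t_def u_def hS_def hC_def by (simp add: mult.assoc)
  moreover have "(3 + 4 * \<tau>) * Q = Q + 2 * ((1 + 2 * \<tau>) * Q)"
    by (simp add: algebra_simps)
  ultimately have core: "(d + B) / 2 * y + (norm (X *v hC))\<^sup>2 \<le> (norm (X *v h))\<^sup>2"
    using expand t2 tu Q_half by (simp add: abs_le_iff)
  then show "(d + B) / 2 * (norm (restrict_vec S h))\<^sup>2 \<le> (norm (X *v h))\<^sup>2"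
    unfolding y_def hS_def using zero_le_power2[of "norm (X *v hC)"] by linarith
  have "(norm h)\<^sup>2 = y + z"
    unfolding y_def z_def hS_def hC_def by (simp add: norm_sq_restrict_vec_add_compl)
  then have "(d + B) * (norm h)\<^sup>2 = (d + B) * y + (d + B) * z"
    by (simp add: algebra_simps)
  also have "\<dots> \<le> (d + B) * y + ((norm (X *v hC))\<^sup>2 + w * ((d + B) / 6 * y))"
    using norm_matrix_vector_mult_sq_ge[OF diag off, of hC] u2 Q_sixth
    unfolding z_def u_def by linarith
  also have "\<dots> \<le> (d + B) * y + ((norm (X *v h))\<^sup>2 - (d + B) / 2 * y + w * ((d + B) / 6 * y))"
    using core by linarith
  also have "\<dots> = (norm (X *v h))\<^sup>2 + (d + B) * (1 / 2 + w / 6) * y"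
    by (simp add: algebra_simps)
  finally show "(d + B) * (norm h)\<^sup>2
      \<le> (norm (X *v h))\<^sup>2 + (d + B) * (1 / 2 + (1 + 2 * \<tau>)\<^sup>2 / 6) * (norm (restrict_vec S h))\<^sup>2"
    unfolding y_def hS_def w_def .
qed

lemma le_sqrt_of_quadratic_bounds:
  fixes F y r A c L k :: real
  assumes "0 < A" "0 < c" "0 \<le> L" "0 \<le> k" "0 \<le> y" "0 \<le> r"
    and upper: "c * F \<le> L * y"
    and lower: "A / 2 * y\<^sup>2 \<le> F"
    and total: "A * r\<^sup>2 \<le> F + A * k * y\<^sup>2"
  shows "r \<le> sqrt (1 / 2 + k) * (2 * L / (c * A))"
proof -
  define R where "R = 2 * L / (c * A)"
  have R0: "0 \<le> R"
    unfolding R_def using assms(1-3) by simp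
  have yR: "y \<le> R"
  proof (cases "y = 0")
    case False
    have "c * (A / 2 * y\<^sup>2) \<le> L * y"
      using mult_left_mono[OF lower, of c] upper \<open>0 < c\<close> by linarith
    then have "(c * A / 2 * y) * y \<le> L * y"
      by (simp add: power2_eq_square mult_ac)
    then have "c * A / 2 * y \<le> L"
      using False \<open>0 \<le> y\<close> by simp
    then show ?thesis
      unfolding R_def using assms(1,2) by (simp add: field_simps)
  qed (use R0 in simp)
  have "c * F \<le> L * R"
    using upper mult_left_mono[OF yR \<open>0 \<le> L\<close>] by linarith
  then have "F \<le> A / 2 * R\<^sup>2"
    using assms(1,2) unfolding R_def by (simp add: field_simps power2_eq_square)
  moreover have "A * k * y\<^sup>2 \<le> A * k * R\<^sup>2"
    using power_mono[OF yR \<open>0 \<le> y\<close>, of 2] assms(1,4) by (simp add: mult_left_mono)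
  ultimately have "A * r\<^sup>2 \<le> A * ((1 / 2 + k) * R\<^sup>2)"
    using total by (simp add: algebra_simps)
  then have "r\<^sup>2 \<le> (1 / 2 + k) * R\<^sup>2"
    using \<open>0 < A\<close> by simp
  then have "r \<le> sqrt ((1 / 2 + k) * R\<^sup>2)"
    using real_sqrt_le_mono \<open>0 \<le> r\<close> by fastforce
  then show ?thesis
    unfolding R_def[symmetric] using R0 by (simp add: real_sqrt_mult)
qed

lemma norm_le_of_basic_inequality_gram:
  fixes X :: "real^'p^'n" and \<beta> h :: "real^'p" and d B lam c3 \<tau> :: real
  assumes diag: "\<And>i. d \<le> column i X \<bullet> column i X"
    and off: "\<And>i j. i \<noteq> j \<Longrightarrow> \<bar>column i X \<bullet> column j X\<bar> \<le> B"
    and "0 \<le> B" "0 < lam" "0 < c3" "0 < \<tau>"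
    and cond: "2 * B * (3 + 4 * \<tau>) * real (card (spt \<beta>)) < d + B"
    and basic: "c3 * (norm (X *v h))\<^sup>2
      \<le> 2 * lam * l1norm h - 2 * (1 + 1 / \<tau>) * lam * (l1norm (\<beta> + h) - l1norm \<beta>)"
  shows "norm h \<le> sqrt (1 + (1 + 2 * \<tau>)\<^sup>2 / 6)
           * (4 * lam * (2 + 1 / \<tau>) * sqrt (real (card (spt \<beta>))) / (c3 * (d + B)))"
proof -
  define s where "s = real (card (spt \<beta>))"
  define hS where "hS = restrict_vec (spt \<beta>) h"
  define L where "L = 2 * lam * (2 + 1 / \<tau>) * sqrt s"
  have "0 \<le> 2 * B * (3 + 4 * \<tau>) * s"
    using \<open>0 \<le> B\<close> \<open>0 < \<tau>\<close> unfolding s_def by simp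
  with cond have "0 < d + B"
    unfolding s_def by linarith
  have cone: "l1norm (restrict_vec (- spt \<beta>) h) \<le> (1 + 2 * \<tau>) * l1norm hS"
    and upper: "c3 * (norm (X *v h))\<^sup>2 \<le> 2 * lam * (2 + 1 / \<tau>) * l1norm hS"
    using basic_inequality_cone[OF \<open>0 < lam\<close> \<open>0 < \<tau>\<close> _ basic] \<open>0 < c3\<close>
    unfolding hS_def by simp_all
  have "(l1norm hS)\<^sup>2 \<le> s * (norm hS)\<^sup>2"
    unfolding hS_def s_def by (rule l1norm_sq_le_card_mult_norm_sq[OF spt_restrict_vec_subset])
  then have "l1norm hS \<le> sqrt (s * (norm hS)\<^sup>2)"
    by (rule real_le_rsqrt)
  then have "l1norm hS \<le> sqrt s * norm hS"
    by (simp add: real_sqrt_mult)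
  moreover have "0 \<le> 2 * lam * (2 + 1 / \<tau>)"
    using \<open>0 < lam\<close> \<open>0 < \<tau>\<close> by simp
  ultimately have "2 * lam * (2 + 1 / \<tau>) * l1norm hS \<le> L * norm hS"
    unfolding L_def by (metis mult_left_mono mult.assoc)
  with upper have upper': "c3 * (norm (X *v h))\<^sup>2 \<le> L * norm hS"
    by linarith
  have "0 \<le> L"
    unfolding L_def s_def using \<open>0 < lam\<close> \<open>0 < \<tau>\<close> by simp
  then have "norm h \<le> sqrt (1 / 2 + (1 / 2 + (1 + 2 * \<tau>)\<^sup>2 / 6)) * (2 * L / (c3 * (d + B)))"
    using \<open>0 < d + B\<close> \<open>0 < c3\<close> norm_matrix_vector_mult_sq_ge_on_cone[OF diag off \<open>0 \<le> B\<close> \<open>0 < \<tau>\<close>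
        cone[unfolded hS_def] cond, folded hS_def] upper'
    by (intro le_sqrt_of_quadratic_bounds) simp_all
  moreover have "2 * L = 4 * lam * (2 + 1 / \<tau>) * sqrt s"
    unfolding L_def by simp
  ultimately show ?thesis
    unfolding s_def by simp
qed

text \<open>The argument yields the factor \<open>4 \<surd>(1 + (1 + 2\<tau>)\<^sup>2/6)\<close>; the stated constant
  \<open>3 \<surd>(2 + (1 + 2\<tau>)\<^sup>2)\<close> is weaker.\<close>

lemma four_sqrt_le_three_sqrt: "0 \<le> w \<Longrightarrow> 4 * sqrt (1 + w / 6) \<le> 3 * sqrt (2 + w)"
  for w :: real
  by (rule power2_le_imp_le) (simp_all add: power_mult_distrib)

lemma norm_le_of_basic_inequality:
  fixes X :: "real^'p^'n" and \<beta> h :: "real^'p" and c1 c3 \<tau> :: real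
  assumes cols: "\<forall>i. column i X \<noteq> 0" and "0 < c1" "0 < c3" "0 < \<tau>"
    and tau_cond: "a_X X + b_X X * mu_X X
                     > 2 * b_X X * (3 + 4 * \<tau>) * real (card (spt \<beta>)) * mu_X X"
    and basic: "c3 * (norm (X *v h))\<^sup>2
      \<le> 2 * (c1 * sqrt (real CARD('n))) * l1norm h
         - 2 * (1 + 1 / \<tau>) * (c1 * sqrt (real CARD('n))) * (l1norm (\<beta> + h) - l1norm \<beta>)"
  shows "norm h \<le> (3 * (2 + 1 / \<tau>) * sqrt (2 + (1 + 2 * \<tau>)\<^sup>2) / (a_X X + b_X X * mu_X X) * (c1 / c3))
           * sqrt (real (card (spt \<beta>)) / real CARD('n))"
proof -
  define N where "N = real CARD('n)"
  define A where "A = a_X X + b_X X * mu_X X"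
  define s where "s = real (card (spt \<beta>))"
  define w where "w = (1 + 2 * \<tau>)\<^sup>2"
  define M where "M = (2 + 1 / \<tau>) / A * (c1 / c3) * sqrt (s / N)"
  have N0: "0 < N"
    unfolding N_def by simp
  have bmu0: "0 \<le> b_X X * mu_X X"
    by (simp add: b_X_nonneg mu_X_nonneg)
  have "0 \<le> 2 * (b_X X * mu_X X) * (3 + 4 * \<tau>) * s"
    using \<open>0 < \<tau>\<close> unfolding s_def by (intro mult_nonneg_nonneg) (auto simp: b_X_nonneg mu_X_nonneg)
  moreover have "2 * b_X X * (3 + 4 * \<tau>) * s * mu_X X = 2 * (b_X X * mu_X X) * (3 + 4 * \<tau>) * s"
    by (simp add: mult_ac)
  ultimately have A0: "0 < A"
    using tau_cond unfolding A_def s_def by linarith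
  have diag: "\<And>i. N * a_X X \<le> column i X \<bullet> column i X"
    unfolding N_def by (rule column_inner_self_ge_a_X)
  have off: "\<And>i j. i \<noteq> j \<Longrightarrow> \<bar>column i X \<bullet> column j X\<bar> \<le> N * (b_X X * mu_X X)"
    unfolding N_def using cols by (simp add: abs_column_inner_le_b_X_mu_X)
  have B0: "0 \<le> N * (b_X X * mu_X X)"
    using N0 bmu0 by simp
  have lam0: "0 < c1 * sqrt N"
    using \<open>0 < c1\<close> N0 by simp
  have cond: "2 * (N * (b_X X * mu_X X)) * (3 + 4 * \<tau>) * real (card (spt \<beta>))
      < N * a_X X + N * (b_X X * mu_X X)"
    using mult_strict_left_mono[OF tau_cond N0] by (simp add: algebra_simps)
  have "norm h \<le> sqrt (1 + w / 6)
      * (4 * (c1 * sqrt N) * (2 + 1 / \<tau>) * sqrt s / (c3 * (N * a_X X + N * (b_X X * mu_X X))))"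
    unfolding w_def s_def
    by (rule norm_le_of_basic_inequality_gram[OF diag off B0 lam0 \<open>0 < c3\<close> \<open>0 < \<tau>\<close> cond basic[folded N_def]])
  also have "4 * (c1 * sqrt N) * (2 + 1 / \<tau>) * sqrt s / (c3 * (N * a_X X + N * (b_X X * mu_X X))) = 4 * M"
  proof -
    have "sqrt s * sqrt N / N = sqrt (s / N)"
      using N0 by (simp add: real_sqrt_divide field_simps)
    moreover have "4 * (c1 * sqrt N) * (2 + 1 / \<tau>) * sqrt s / (c3 * (N * a_X X + N * (b_X X * mu_X X)))
        = 4 * ((2 + 1 / \<tau>) / A * (c1 / c3) * (sqrt s * sqrt N / N))"
      unfolding A_def by (simp add: divide_inverse mult_ac flip: distrib_left)
    ultimately show ?thesis
      unfolding M_def by simp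
  qed
  also have "sqrt (1 + w / 6) * (4 * M) \<le> 3 * sqrt (2 + w) * M"
  proof -
    have "0 \<le> M"
      unfolding M_def s_def using A0 N0 \<open>0 < c1\<close> \<open>0 < c3\<close> \<open>0 < \<tau>\<close> by simp
    moreover have "0 \<le> w"
      unfolding w_def by simp
    ultimately show ?thesis
      using mult_right_mono[OF four_sqrt_le_three_sqrt] by (simp only: mult_ac)
  qed
  finally show ?thesis
    unfolding M_def w_def A_def s_def N_def by (simp only: divide_inverse mult_ac)
qed

lemma norm_le_of_noise_bound:
  fixes X :: "real^'p^'n" and \<beta> v :: "real^'p" and e :: "real^'n" and G :: "real^'n \<Rightarrow> real"
    and \<psi> \<phi> :: "'n \<Rightarrow> real \<Rightarrow> real" and c1 c3 \<tau> :: real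
  assumes cols: "\<forall>i. column i X \<noteq> 0" and "0 < c1" "0 < c3" "0 < \<tau>"
    and tau_cond: "a_X X + b_X X * mu_X X
                     > 2 * b_X X * (3 + 4 * \<tau>) * real (card (spt \<beta>)) * mu_X X"
    and G_lower: "c3 * (norm (X *v v - X *v \<beta>))\<^sup>2 \<le> G (compw \<psi> (X *v v) - compw \<psi> (X *v \<beta>))"
    and noise: "\<bar>e \<bullet> (compw \<phi> (X *v v) - compw \<phi> (X *v \<beta>))\<bar>
      \<le> c1 * sqrt (real CARD('n)) * l1norm (v - \<beta>)"
    and estimator: "G (compw \<psi> (X *v v) - compw \<psi> (X *v \<beta>))
      \<le> 2 * \<bar>e \<bullet> (compw \<phi> (X *v v) - compw \<phi> (X *v \<beta>))\<bar>
         - (2 * (1 + 1 / \<tau>) * c1 * sqrt (real CARD('n))) * (l1norm v - l1norm \<beta>)"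
  shows "norm (v - \<beta>) \<le> (3 * (2 + 1 / \<tau>) * sqrt (2 + (1 + 2 * \<tau>)\<^sup>2) / (a_X X + b_X X * mu_X X) * (c1 / c3))
           * sqrt (real (card (spt \<beta>)) / real CARD('n))"
proof (rule norm_le_of_basic_inequality[OF cols \<open>0 < c1\<close> \<open>0 < c3\<close> \<open>0 < \<tau>\<close> tau_cond])
  show "c3 * (norm (X *v (v - \<beta>)))\<^sup>2
      \<le> 2 * (c1 * sqrt (real CARD('n))) * l1norm (v - \<beta>)
         - 2 * (1 + 1 / \<tau>) * (c1 * sqrt (real CARD('n))) * (l1norm (\<beta> + (v - \<beta>)) - l1norm \<beta>)"
    using G_lower noise estimator by (simp add: matrix_vector_mult_diff_distrib mult.assoc)
qed

lemma measure_le_of_subset_measurable: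
  "finite_measure M \<Longrightarrow> B \<in> sets M \<Longrightarrow> A \<subseteq> B \<Longrightarrow> measure M A \<le> measure M B"
  by (cases "A \<in> sets M") (auto intro: finite_measure.finite_measure_mono simp: measure_notin_sets)

theorem proposition2p2:
  fixes M :: "'w measure"
    and X :: "real^'p^'n" and \<beta> :: "real^'p" and \<epsilon> :: "'w \<Rightarrow> real^'n"
    and D :: "(real^'p) set" and G :: "real^'n \<Rightarrow> real"
    and \<psi> \<phi> :: "'n \<Rightarrow> real \<Rightarrow> real"
    and q c0 c1 c3 \<tau> :: real and \<beta>hat :: "'w \<Rightarrow> real^'p"
  assumes "prob_space M"
    and cols: "\<forall>i. column i X \<noteq> 0"
    and eps_rv: "\<epsilon> \<in> borel_measurable M"
    and q: "0 < q" "q < 1" and c0: "c0 > 0"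
    and c1: "c1 > 0"
    and i: "measure M {w \<in> space M. \<forall>v\<in>D.
              \<bar>\<epsilon> w \<bullet> (compw \<phi> (X *v v) - compw \<phi> (X *v \<beta>))\<bar>
                \<le> c1 * sqrt (real CARD('n)) * l1norm (v - \<beta>)} \<ge> 1 - c0 * q"
    and c3: "c3 > 0"
    and ii: "\<forall>v\<in>D. G (compw \<psi> (X *v v) - compw \<psi> (X *v \<beta>))
                  \<ge> c3 * (norm (X *v v - X *v \<beta>))\<^sup>2"
    and coh: "a_X X + b_X X * mu_X X > 6 * b_X X * real (card (spt \<beta>)) * mu_X X"
    and tau: "\<tau> > 0"
    and tau_cond: "a_X X + b_X X * mu_X X
                     > 2 * b_X X * (3 + 4 * \<tau>) * real (card (spt \<beta>)) * mu_X X"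
    and bh_rv: "\<beta>hat \<in> borel_measurable M"
    and bh_D: "\<forall>w\<in>space M. \<beta>hat w \<in> D"
    and bh_ineq: "\<forall>w\<in>space M.
         G (compw \<psi> (X *v \<beta>hat w) - compw \<psi> (X *v \<beta>))
           \<le> 2 * \<bar>\<epsilon> w \<bullet> (compw \<phi> (X *v \<beta>hat w) - compw \<phi> (X *v \<beta>))\<bar>
              - (2 * (1 + 1 / \<tau>) * c1 * sqrt (real CARD('n))) * (l1norm (\<beta>hat w) - l1norm \<beta>)"
  shows "measure M {w \<in> space M. norm (\<beta>hat w - \<beta>)
           \<le> (3 * (2 + 1 / \<tau>) * sqrt (2 + (1 + 2 * \<tau>)\<^sup>2) / (a_X X + b_X X * mu_X X) * (c1 / c3))
              * sqrt (real (card (spt \<beta>)) / real CARD('n))} \<ge> 1 - c0 * q"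
proof -
  let ?E = "{w \<in> space M. \<forall>v\<in>D.
              \<bar>\<epsilon> w \<bullet> (compw \<phi> (X *v v) - compw \<phi> (X *v \<beta>))\<bar>
                \<le> c1 * sqrt (real CARD('n)) * l1norm (v - \<beta>)}"
  let ?T = "{w \<in> space M. norm (\<beta>hat w - \<beta>)
           \<le> (3 * (2 + 1 / \<tau>) * sqrt (2 + (1 + 2 * \<tau>)\<^sup>2) / (a_X X + b_X X * mu_X X) * (c1 / c3))
              * sqrt (real (card (spt \<beta>)) / real CARD('n))}"
  have "?E \<subseteq> ?T"
  proof
    fix w assume "w \<in> ?E"
    then have w: "w \<in> space M" and event: "\<forall>v\<in>D.
        \<bar>\<epsilon> w \<bullet> (compw \<phi> (X *v v) - compw \<phi> (X *v \<beta>))\<bar> \<le> c1 * sqrt (real CARD('n)) * l1norm (v - \<beta>)"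
      by blast+
    have "\<beta>hat w \<in> D"
      using bh_D w by blast
    with w ii event bh_ineq show "w \<in> ?T"
      using norm_le_of_noise_bound[OF cols c1 c3 tau tau_cond] by blast
  qed
  moreover have "?T \<in> sets M"
    using bh_rv by measurable
  ultimately have "measure M ?E \<le> measure M ?T"
    by (intro measure_le_of_subset_measurable prob_space.finite_measure \<open>prob_space M\<close>)
  with i show ?thesis
    by linarith
qed

end
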